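(* Let $\mathbf a^*=\{a^*_i\}_{i\in\mathbb Z}$ be a finitely supported mask such that the stationary subdivision scheme $\{S_{\mathbf a^*}\}$ (using the mask $\mathbf a^*$ at every level) is convergent, and suppose there is a positive integer $n$ with $\mu^*:=\|(S_{\mathbf q^*})^n\|<1$, where $\{S_{\mathbf q^*}\}$ is the difference scheme of $\{S_{\mathbf a^*}\}$. Let $\{S_{\mathbf a^{[k]}},\,k\ge 0\}$ be a local non-stationary subdivision scheme that reproduces constants and is asymptotically similar to $\{S_{\mathbf a^*}\}$, i.e. $\lim_{k\to\infty}\|\mathbf a^{[k]}-\mathbf a^*\|=0$. Then $\{S_{\mathbf a^{[k]}},\,k\ge 0\}$ is convergent, and for every $\eta\in((\mu^* )^{1/n},1)$ there exists a constant $C>0$ such that for every bounded initial sequence $\mathbf f^{[0]}$, $$\Big\|S^\infty_{\{\mathbf a^{[k]},\,k\ge0\}}\mathbf f^{[0]}-\mathcal{PL}(\mathbf f^{[k+1]})\Big\|\le C\,\eta^k\,\|\Delta\mathbf f^{[0]}\|,\qquad k\ge 0.$$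
   Context: A (binary, uniform) subdivision scheme $\{S_{\mathbf a^{[k]}},\,k\ge0\}$ is given by finitely supported masks $\mathbf a^{[k]}=\{a^{[k]}_i\}_{i\in\mathbb Z}$ and operators $(S_{\mathbf a^{[k]}}\mathbf f)_i=\sum_{j\in\mathbb Z}a^{[k]}_{i-2j}f_j$ on sequences $\mathbf f\in\mathbb R^{\mathbb Z}$; starting from $\mathbf f^{[0]}$ one sets $\mathbf f^{[k+1]}=S_{\mathbf a^{[k]}}\mathbf f^{[k]}$, the values $f^{[k]}_i$ being attached to the points $i2^{-k}$. The scheme is local: there is a positive integer $N$ with $\{i: a^{[k]}_i\neq0\}\subseteq[-N,N]$ for all $k$. It is stationary if $\mathbf a^{[k]}$ does not depend on $k$. All norms are sup-norms: for sequences $\|\mathbf f\|=\sup_i|f_i|$, and for operators $\|S_{\mathbf a}\|=\max\big(\sum_i|a_{2i}|,\sum_i|a_{2i+1}|\big)$ (the operator norm on bounded sequences with the sup-norm). The scheme reproduces constants if $\sum_i a^{[k]}_{2i}=\sum_i a^{[k]}_{2i+1}=1$ for all $k$; then the symbol $a^{[k]}(z)=\sum_i a^{[k]}_iz^i$ factors as $(1+z)q^{[k]}(z)$ with $q^{[k]}_i=\sum_{j\le i}(-1)^{i-j}a^{[k]}_j$, and $\{S_{\mathbf q^{[k]}},\,k\ge0\}$ is called the difference scheme; it satisfies $\Delta\mathbf f^{[k+1]}=S_{\mathbf q^{[k]}}\Delta\mathbf f^{[k]}$, where $(\Delta\mathbf f)_i=f_i-f_{i-1}$. $\mathcal{PL}(\mathbf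 f^{[k]})$ denotes the piecewise linear function on $\mathbb R$ interpolating $f^{[k]}_i$ at $i2^{-k}$. The scheme is convergent if for every bounded $\mathbf f^{[0]}$ the functions $\mathcal{PL}(\mathbf f^{[k]})$ converge uniformly on $\mathbb R$; the limit is denoted $S^\infty_{\{\mathbf a^{[k]},\,k\ge0\}}\mathbf f^{[0]}$. Two schemes $\{S_{\mathbf a^{[k]}}\}$, $\{S_{\mathbf a^{*[k]}}\}$ are asymptotically similar if $\lim_{k\to\infty}\|\mathbf a^{[k]}-\mathbf a^{*[k]}\|=0$. *)

theory Defs
  imports "HOL-Analysis.Analysis"
begin

type_synonym mask = "int \<Rightarrow> real"
type_synonym sequence = "int \<Rightarrow> real"

definition fin_supp :: "mask \<Rightarrow> bool" where
  "fin_supp a \<longleftrightarrow> finite {i. a i \<noteq> 0}"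

definition subd :: "mask \<Rightarrow> sequence \<Rightarrow> sequence" where
  "subd a f i = (\<Sum>j\<in>{j. a (i - 2*j) \<noteq> 0}. a (i - 2*j) * f j)"

fun iter_seq :: "(nat \<Rightarrow> mask) \<Rightarrow> sequence \<Rightarrow> nat \<Rightarrow> sequence" where
  "iter_seq a f 0 = f"
| "iter_seq a f (Suc k) = subd (a k) (iter_seq a f k)"

definition bounded_seq :: "sequence \<Rightarrow> bool" where
  "bounded_seq f \<longleftrightarrow> bdd_above (range (\<lambda>i. \<bar>f i\<bar>))"

definition seq_norm :: "sequence \<Rightarrow> real" where
  "seq_norm f = (SUP i. \<bar>f i\<bar>)"

definition diff :: "sequence \<Rightarrow> sequence" where
  "diff f i = f i - f (i - 1)"

definition PL :: "sequence \<Rightarrow> nat \<Rightarrow> real \<Rightarrow> real" where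
  "PL g k x = (let t = x * 2 ^ k; i = \<lfloor>t\<rfloor>
               in (1 - (t - of_int i)) * g i + (t - of_int i) * g (i + 1))"

definition convergent_scheme :: "(nat \<Rightarrow> mask) \<Rightarrow> bool" where
  "convergent_scheme a \<longleftrightarrow>
     (\<forall>f. bounded_seq f \<longrightarrow>
        (\<exists>g. uniform_limit UNIV (\<lambda>k x. PL (iter_seq a f k) k x) g sequentially))"

definition limit_fun :: "(nat \<Rightarrow> mask) \<Rightarrow> sequence \<Rightarrow> real \<Rightarrow> real" where
  "limit_fun a f = (THE g. uniform_limit UNIV (\<lambda>k x. PL (iter_seq a f k) k x) g sequentially)"

definition local_scheme :: "(nat \<Rightarrow> mask) \<Rightarrow> bool" where
  "local_scheme a \<longleftrightarrow> (\<exists>N::int. N > 0 \<and> (\<forall>k i. a k i \<noteq> 0 \<longrightarrow> i \<in> {-N..N}))"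

definition reproduces_constants :: "(nat \<Rightarrow> mask) \<Rightarrow> bool" where
  "reproduces_constants a \<longleftrightarrow>
     (\<forall>k. (\<Sum>i\<in>{i. a k (2*i) \<noteq> 0}. a k (2*i)) = 1
        \<and> (\<Sum>i\<in>{i. a k (2*i+1) \<noteq> 0}. a k (2*i+1)) = 1)"

definition diff_mask :: "mask \<Rightarrow> mask" where
  "diff_mask a i = (\<Sum>j\<in>{j. j \<le> i \<and> a j \<noteq> 0}. (-1) ^ nat (i - j) * a j)"

definition op_norm_pow :: "mask \<Rightarrow> nat \<Rightarrow> real" where
  "op_norm_pow a n =
     (SUP f\<in>{f. bounded_seq f \<and> seq_norm f \<le> 1}. seq_norm ((subd a ^^ n) f))"

end

theory Submission
  imports Defs
begin

(* Writing a(z) = (1 + z) q(z), the differences of the refined data evolve under the difference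
   scheme: diff f^[k] = S_{q^[k-1]} ... S_{q^[0]} diff f^[0].  Asymptotic similarity forces
   q^[k] -> q* coefficientwise, so for large k any n consecutive difference operators are close to
   (S_{q*})^n and have norm at most eta^n; hence ||diff f^[k]|| <= C eta^k ||diff f^[0]||.  Because
   the masks reproduce constants, the piecewise linear interpolants at levels k and k+1 differ by
   O(||diff f^[k]||), so they form a uniformly Cauchy sequence with a geometric tail, which gives
   both the convergence and the rate. *)

lemma seq_norm_upper: "bounded_seq g \<Longrightarrow> \<bar>g i\<bar> \<le> seq_norm g"
  unfolding seq_norm_def bounded_seq_def by (rule cSUP_upper) auto

lemma seq_norm_nonneg: "bounded_seq g \<Longrightarrow> 0 \<le> seq_norm g"
  using seq_norm_upper[of g 0] by linarith

lemma seq_norm_le: "(\<And>i. \<bar>g i\<bar> \<le> c) \<Longrightarrow> seq_norm g \<le> c"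
  unfolding seq_norm_def by (rule cSUP_least) auto

lemma bounded_seqI: "(\<And>i. \<bar>g i\<bar> \<le> c) \<Longrightarrow> bounded_seq g"
  unfolding bounded_seq_def by (rule bdd_aboveI[of _ c]) auto

lemma bounded_seq_minus:
  assumes "bounded_seq f" "bounded_seq g"
  shows "bounded_seq (\<lambda>i. f i - g i)"
proof (rule bounded_seqI)
  fix i show "\<bar>f i - g i\<bar> \<le> seq_norm f + seq_norm g"
    using seq_norm_upper[OF assms(1), of i] seq_norm_upper[OF assms(2), of i] by linarith
qed

lemma bounded_seq_diff:
  assumes "bounded_seq f"
  shows "bounded_seq (diff f)"
proof -
  have "bounded_seq (\<lambda>i. f (i - 1))" by (rule bounded_seqI) (rule seq_norm_upper[OF assms])
  then show ?thesis unfolding diff_def by (rule bounded_seq_minus[OF assms])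
qed

lemma bounded_seq_finite_support: "finite {i. g i \<noteq> 0} \<Longrightarrow> bounded_seq g"
  unfolding bounded_seq_def
  by (rule bdd_above_mono[of "insert 0 ((\<lambda>i. \<bar>g i\<bar>) ` {i. g i \<noteq> 0})"]) auto

lemma abs_minus_le_seq_norm_diff:
  assumes f: "bounded_seq f"
  shows "\<bar>f j - f i\<bar> \<le> real_of_int \<bar>j - i\<bar> * seq_norm (diff f)"
proof -
  have step: "\<bar>f (i + int d) - f i\<bar> \<le> real d * seq_norm (diff f)" for i d
  proof (induction d)
    case (Suc d)
    have "\<bar>f (i + int (Suc d)) - f (i + int d)\<bar> \<le> seq_norm (diff f)"
      using seq_norm_upper[OF bounded_seq_diff[OF f], of "i + int (Suc d)"]
      by (simp add: diff_def algebra_simps)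
    with Suc show ?case by (simp add: algebra_simps)
  qed simp
  show ?thesis
  proof (cases "i \<le> j")
    case True
    then show ?thesis using step[of i "nat (j - i)"] by simp
  next
    case False
    then show ?thesis using step[of j "nat (i - j)"] by (simp add: abs_minus_commute)
  qed
qed

lemma sum_reindex_support:
  assumes "finite A" "inj_on g A" "{y. h y \<noteq> 0} \<subseteq> g ` A"
  shows "(\<Sum>x\<in>A. h (g x)) = (\<Sum>y | h y \<noteq> 0. h y)"
proof -
  have "(\<Sum>x\<in>A. h (g x)) = (\<Sum>y\<in>g ` A. h y)"
    by (simp add: sum.reindex[OF assms(2)])
  also have "\<dots> = (\<Sum>y | h y \<noteq> 0. h y)"
    by (rule sum.mono_neutral_right) (use assms in auto)
  finally show ?thesis .
qed

definition supp_in :: "mask \<Rightarrow> int \<Rightarrow> bool" where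
  "supp_in b M \<longleftrightarrow> (\<forall>i. b i \<noteq> 0 \<longrightarrow> -M \<le> i \<and> i \<le> M)"

definition window :: "int \<Rightarrow> int \<Rightarrow> int set" where
  "window M i = {j. -M \<le> i - 2*j \<and> i - 2*j \<le> M}"

text \<open>Sums both parities, so it bounds the operator norm of \<open>S\<^sub>b\<close> for masks supported in
  \<open>[-M, M]\<close>; this cruder norm is all the argument needs.\<close>
definition mask_l1 :: "int \<Rightarrow> mask \<Rightarrow> real" where
  "mask_l1 M b = (\<Sum>m\<in>{-M..M}. \<bar>b m\<bar>)"

definition mask_reproduces_constants :: "mask \<Rightarrow> bool" where
  "mask_reproduces_constants b \<longleftrightarrow>
     (\<Sum>i | b (2*i) \<noteq> 0. b (2*i)) = 1 \<and> (\<Sum>i | b (2*i+1) \<noteq> 0. b (2*i+1)) = 1"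

lemma finite_window: "finite (window M i)"
proof (rule finite_subset)
  show "window M i \<subseteq> {-\<bar>i\<bar>-\<bar>M\<bar> .. \<bar>i\<bar>+\<bar>M\<bar>}" unfolding window_def by auto
qed simp

lemma mask_l1_nonneg: "0 \<le> mask_l1 M b"
  unfolding mask_l1_def by (rule sum_nonneg) auto

lemma supp_in_minus: "supp_in b M \<Longrightarrow> supp_in c M \<Longrightarrow> supp_in (\<lambda>i. b i - c i) M"
  unfolding supp_in_def by (metis diff_self)

lemma supp_in_limit:
  assumes "\<And>k. supp_in (b k) M" "\<And>i. (\<lambda>k. b k i) \<longlonglongrightarrow> c i"
  shows "supp_in c M"
  unfolding supp_in_def
proof (intro allI impI)
  fix i assume "c i \<noteq> 0"
  moreover have "c i = 0" if "\<not> (-M \<le> i \<and> i \<le> M)"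
  proof -
    have "\<And>k. b k i = 0" using that assms(1) unfolding supp_in_def by blast
    then show ?thesis using LIMSEQ_unique[OF assms(2)[of i]] by simp
  qed
  ultimately show "-M \<le> i \<and> i \<le> M" by blast
qed

lemma subd_eq_sum:
  assumes "finite A" "{j. b (i - 2*j) \<noteq> 0} \<subseteq> A"
  shows "subd b f i = (\<Sum>j\<in>A. b (i - 2*j) * f j)"
  unfolding subd_def by (rule sum.mono_neutral_right[symmetric]) (use assms in auto)

lemma subd_eq_sum_window: "supp_in b M \<Longrightarrow> subd b f i = (\<Sum>j\<in>window M i. b (i - 2*j) * f j)"
  by (rule subd_eq_sum[OF finite_window]) (auto simp: supp_in_def window_def)

lemma subd_minus: "subd b (\<lambda>j. f j - g j) i = subd b f i - subd b g i"
  by (simp add: subd_def algebra_simps sum_subtractf)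

lemma subd_scale: "subd b (\<lambda>j. r * g j) = (\<lambda>i. r * subd b g i)"
  by (simp add: subd_def fun_eq_iff sum_distrib_left algebra_simps)

lemma subd_mask_minus:
  "supp_in b M \<Longrightarrow> supp_in c M \<Longrightarrow> subd (\<lambda>i. b i - c i) f i = subd b f i - subd c f i"
  using supp_in_minus[of b M c] by (simp add: subd_eq_sum_window algebra_simps sum_subtractf)

lemma subd_shift: "subd c (\<lambda>j. g (j - 1)) i = subd c g (i - 2)"
  unfolding subd_def
  by (rule sum.reindex_bij_witness[of _ "\<lambda>j. j + 1" "\<lambda>j. j - 1"]) (auto simp: algebra_simps)

lemma sum_abs_window_le: "supp_in b M \<Longrightarrow> (\<Sum>j\<in>window M i. \<bar>b (i - 2*j)\<bar>) \<le> mask_l1 M b"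
proof -
  have inj: "inj_on (\<lambda>j. i - 2*j) (window M i)" by (rule inj_onI) auto
  have "(\<Sum>j\<in>window M i. \<bar>b (i - 2*j)\<bar>) = (\<Sum>m\<in>(\<lambda>j. i - 2*j) ` window M i. \<bar>b m\<bar>)"
    by (simp add: sum.reindex[OF inj])
  also have "\<dots> \<le> mask_l1 M b"
    unfolding mask_l1_def by (rule sum_mono2) (auto simp: window_def)
  finally show ?thesis .
qed

lemma abs_subd_le:
  assumes "supp_in b M" "bounded_seq g"
  shows "\<bar>subd b g i\<bar> \<le> mask_l1 M b * seq_norm g"
proof -
  have "\<bar>subd b g i\<bar> \<le> (\<Sum>j\<in>window M i. \<bar>b (i - 2*j)\<bar> * \<bar>g j\<bar>)"
    unfolding subd_eq_sum_window[OF assms(1)] abs_mult[symmetric] by (rule sum_abs)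
  also have "\<dots> \<le> (\<Sum>j\<in>window M i. \<bar>b (i - 2*j)\<bar>) * seq_norm g"
    unfolding sum_distrib_right
    by (intro sum_mono mult_left_mono seq_norm_upper[OF assms(2)]) simp
  also have "\<dots> \<le> mask_l1 M b * seq_norm g"
    by (intro mult_right_mono sum_abs_window_le seq_norm_nonneg assms)
  finally show ?thesis .
qed

lemma bounded_seq_subd: "supp_in b M \<Longrightarrow> bounded_seq g \<Longrightarrow> bounded_seq (subd b g)"
  by (rule bounded_seqI[OF abs_subd_le])

lemma seq_norm_subd_le: "supp_in b M \<Longrightarrow> bounded_seq g \<Longrightarrow> seq_norm (subd b g) \<le> mask_l1 M b * seq_norm g"
  by (rule seq_norm_le[OF abs_subd_le])

lemma parity_sum_eq_one:
  assumes "mask_reproduces_constants b" "p \<in> {0, 1}"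
  shows "(\<Sum>l | b (2*l + p) \<noteq> 0. b (2*l + p)) = 1"
  using assms unfolding mask_reproduces_constants_def by auto

lemma window_sum_eq_one:
  assumes b: "supp_in b M" and rc: "mask_reproduces_constants b"
  shows "(\<Sum>j\<in>window M m. b (m - 2*j)) = 1"
proof -
  define p where "p = m mod 2"
  define r where "r = m div 2"
  have m: "m = 2*r + p" unfolding p_def r_def by simp
  have "(\<Sum>j\<in>window M m. b (m - 2*j)) = (\<Sum>j\<in>window M m. b (2*(r - j) + p))"
    by (simp add: m algebra_simps)
  also have "\<dots> = (\<Sum>l | b (2*l + p) \<noteq> 0. b (2*l + p))"
  proof (rule sum_reindex_support[OF finite_window])
    show "inj_on (\<lambda>j. r - j) (window M m)" by (rule inj_onI) simp
    show "{l. b (2*l + p) \<noteq> 0} \<subseteq> (\<lambda>j. r - j) ` window M m"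
    proof
      fix l assume "l \<in> {l. b (2*l + p) \<noteq> 0}"
      then have "r - l \<in> window M m" using b unfolding supp_in_def window_def m by auto
      then show "l \<in> (\<lambda>j. r - j) ` window M m" by (rule rev_image_eqI) simp
    qed
  qed
  also have "\<dots> = 1" by (rule parity_sum_eq_one[OF rc]) (auto simp: p_def)
  finally show ?thesis .
qed

lemma diff_mask_eq_sum:
  "supp_in b M \<Longrightarrow> diff_mask b i = (\<Sum>j\<in>{-M..i}. (-1) ^ nat (i - j) * b j)"
  unfolding diff_mask_def supp_in_def by (rule sum.mono_neutral_right[symmetric]) auto

lemma diff_mask_below: "supp_in b M \<Longrightarrow> i < -M \<Longrightarrow> diff_mask b i = 0"
  by (simp add: diff_mask_eq_sum)

lemma diff_mask_add_shift:
  assumes b: "supp_in b M"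
  shows "b i = diff_mask b i + diff_mask b (i - 1)"
proof (cases "i < -M")
  case True
  then have "b i = 0" using b unfolding supp_in_def by force
  then show ?thesis using True diff_mask_below[OF b] by simp
next
  case False
  have "{-M..i} = insert i {-M..i-1}" using False by auto
  then have "diff_mask b i = b i + (\<Sum>j\<in>{-M..i-1}. (-1) ^ nat (i - j) * b j)"
    by (simp add: diff_mask_eq_sum[OF b])
  also have "(\<Sum>j\<in>{-M..i-1}. (-1) ^ nat (i - j) * b j) = - diff_mask b (i - 1)"
    unfolding diff_mask_eq_sum[OF b] sum_negf[symmetric]
  proof (rule sum.cong)
    fix j assume "j \<in> {-M..i-1}"
    then have "nat (i - j) = Suc (nat (i - 1 - j))" by auto
    then show "(-1) ^ nat (i - j) * b j = - ((-1) ^ nat (i - 1 - j) * b j)" by simp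
  qed simp
  finally show ?thesis by simp
qed

lemma sum_parity_class_eq_window_sum:
  assumes b: "supp_in b M" and i: "M \<le> i"
  shows "(\<Sum>j\<in>{-M..i}. if even (m - j) then b j else 0) = (\<Sum>t\<in>window M m. b (m - 2*t))"
proof -
  let ?h = "\<lambda>j. if even (m - j) then b j else 0"
  have support: "{j. ?h j \<noteq> 0} \<subseteq> {j. -M \<le> j \<and> j \<le> M \<and> even (m - j)}"
    using b unfolding supp_in_def by (auto split: if_splits)
  have "(\<Sum>j\<in>{-M..i}. ?h j) = (\<Sum>j | ?h j \<noteq> 0. ?h j)"
    by (rule sum.mono_neutral_right) (use b i in \<open>auto simp: supp_in_def\<close>)
  also have "\<dots> = (\<Sum>t\<in>window M m. ?h (m - 2*t))"
  proof (rule sum_reindex_support[symmetric, OF finite_window])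
    show "inj_on (\<lambda>t. m - 2*t) (window M m)" by (rule inj_onI) simp
    show "{j. ?h j \<noteq> 0} \<subseteq> (\<lambda>t. m - 2*t) ` window M m"
    proof
      fix j assume "j \<in> {j. ?h j \<noteq> 0}"
      then have j: "-M \<le> j" "j \<le> M" "even (m - j)" using support by auto
      then have "j = m - 2 * ((m - j) div 2)" by simp
      moreover have "(m - j) div 2 \<in> window M m" using j unfolding window_def by auto
      ultimately show "j \<in> (\<lambda>t. m - 2*t) ` window M m" by (rule image_eqI)
    qed
  qed
  also have "\<dots> = (\<Sum>t\<in>window M m. b (m - 2*t))" by simp
  finally show ?thesis .
qed

text \<open>Splitting \<open>(-1)^(i-j)\<close> by the parity of \<open>i - j\<close>, for \<open>i \<ge> M\<close> the difference mask is
  the sum of one parity class of coefficients minus the other, i.e. \<open>1 - 1\<close>.\<close>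
lemma diff_mask_above:
  assumes b: "supp_in b M" and rc: "mask_reproduces_constants b" and i: "M \<le> i"
  shows "diff_mask b i = 0"
proof -
  have "diff_mask b i = (\<Sum>j\<in>{-M..i}. (if even (i - j) then b j else 0) - (if even (i - 1 - j) then b j else 0))"
    unfolding diff_mask_eq_sum[OF b]
  proof (rule sum.cong)
    fix j assume "j \<in> {-M..i}"
    then have "(-1::real) ^ nat (i - j) = (if even (i - j) then 1 else -1)"
      by (simp add: even_nat_iff)
    moreover have "even (i - 1 - j) \<longleftrightarrow> odd (i - j)" by presburger
    ultimately show "(-1) ^ nat (i - j) * b j =
        (if even (i - j) then b j else 0) - (if even (i - 1 - j) then b j else 0)" by simp
  qed simp
  also have "\<dots> = 1 - 1"
    unfolding sum_subtractf sum_parity_class_eq_window_sum[OF b i]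
    by (simp add: window_sum_eq_one[OF b rc])
  finally show ?thesis by simp
qed

lemma supp_in_diff_mask:
  assumes "supp_in b M" "mask_reproduces_constants b"
  shows "supp_in (diff_mask b) M"
  unfolding supp_in_def
proof (intro allI impI)
  fix i assume "diff_mask b i \<noteq> 0"
  then show "-M \<le> i \<and> i \<le> M"
    using diff_mask_below[OF assms(1), of i] diff_mask_above[OF assms, of i] by fastforce
qed

lemma subd_add_shifted_mask:
  assumes c: "supp_in c M" and b: "\<And>i. b i = c i + c (i - 1)"
  shows "subd b f m = subd c f m + subd c f (m - 1)"
proof -
  let ?A = "window (M + 1) m"
  have "{j. b (m - 2*j) \<noteq> 0} \<subseteq> ?A"
  proof
    fix j assume "j \<in> {j. b (m - 2*j) \<noteq> 0}"
    then have "c (m - 2*j) \<noteq> 0 \<or> c (m - 2*j - 1) \<noteq> 0" by (auto simp: b)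
    then show "j \<in> ?A"
      using c[unfolded supp_in_def, rule_format, of "m - 2*j"]
        c[unfolded supp_in_def, rule_format, of "m - 2*j - 1"]
      unfolding window_def by auto
  qed
  then have "subd b f m = (\<Sum>j\<in>?A. b (m - 2*j) * f j)"
    by (rule subd_eq_sum[OF finite_window])
  also have "\<dots> = (\<Sum>j\<in>?A. c (m - 2*j) * f j) + (\<Sum>j\<in>?A. c (m - 1 - 2*j) * f j)"
    by (simp add: b algebra_simps sum.distrib)
  also have "\<dots> = subd c f m + subd c f (m - 1)"
    by (intro arg_cong2[where f="(+)"] subd_eq_sum[OF finite_window, symmetric])
      (use c in \<open>auto simp: supp_in_def window_def\<close>)
  finally show ?thesis .
qed

lemma diff_subd:
  assumes b: "supp_in b M" and rc: "mask_reproduces_constants b"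
  shows "diff (subd b f) = subd (diff_mask b) (diff f)"
proof
  fix i
  have split: "subd b f m = subd (diff_mask b) f m + subd (diff_mask b) f (m - 1)" for m
    by (rule subd_add_shifted_mask[OF supp_in_diff_mask[OF b rc] diff_mask_add_shift[OF b]])
  have "diff (subd b f) i = subd (diff_mask b) f i - subd (diff_mask b) f (i - 2)"
    unfolding diff_def split[of i] split[of "i - 1"] by simp
  also have "\<dots> = subd (diff_mask b) f i - subd (diff_mask b) (\<lambda>j. f (j - 1)) i"
    by (simp only: subd_shift)
  also have "\<dots> = subd (diff_mask b) (diff f) i"
    unfolding diff_def by (rule subd_minus[symmetric])
  finally show "diff (subd b f) i = subd (diff_mask b) (diff f) i" .
qed

lemma abs_subd_minus_le:
  assumes b: "supp_in b M" and rc: "mask_reproduces_constants b" and f: "bounded_seq f"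
    and M: "0 \<le> M" and m: "\<bar>m - 2*i\<bar> \<le> 2"
  shows "\<bar>subd b f m - f i\<bar> \<le> mask_l1 M b * (real_of_int (M + 2) * seq_norm (diff f))"
proof -
  let ?D = "real_of_int (M + 2) * seq_norm (diff f)"
  have D: "0 \<le> ?D" using M seq_norm_nonneg[OF bounded_seq_diff[OF f]] by simp
  have "subd b f m - f i = (\<Sum>j\<in>window M m. b (m - 2*j) * f j) - (\<Sum>j\<in>window M m. b (m - 2*j)) * f i"
    by (simp add: subd_eq_sum_window[OF b] window_sum_eq_one[OF b rc])
  also have "\<dots> = (\<Sum>j\<in>window M m. b (m - 2*j) * (f j - f i))"
    by (simp add: sum_distrib_right right_diff_distrib sum_subtractf)
  also have "\<bar>\<dots>\<bar> \<le> (\<Sum>j\<in>window M m. \<bar>b (m - 2*j)\<bar> * ?D)"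
  proof (rule order_trans[OF sum_abs sum_mono])
    fix j assume "j \<in> window M m"
    then have "\<bar>j - i\<bar> \<le> M + 2" using m unfolding window_def by auto
    then have "real_of_int \<bar>j - i\<bar> \<le> M + 2" by (metis of_int_le_iff)
    then have "\<bar>f j - f i\<bar> \<le> ?D"
      using abs_minus_le_seq_norm_diff[OF f, of j i] seq_norm_nonneg[OF bounded_seq_diff[OF f]]
      by (meson mult_right_mono order_trans)
    then show "\<bar>b (m - 2*j) * (f j - f i)\<bar> \<le> \<bar>b (m - 2*j)\<bar> * ?D"
      by (simp add: abs_mult mult_left_mono)
  qed
  also have "\<dots> \<le> mask_l1 M b * ?D"
    unfolding sum_distrib_right[symmetric] by (rule mult_right_mono[OF sum_abs_window_le[OF b] D])
  finally show ?thesis .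
qed

text \<open>The point \<open>x\<close> lies in a cell \<open>[i, i+1] 2^-k\<close> of level \<open>k\<close> and in a cell
  \<open>[m, m+1] 2^-(k+1)\<close> of level \<open>k+1\<close> with \<open>m \<in> {2i, 2i+1}\<close>; both interpolants are
  compared with the value \<open>f i\<close>.\<close>
lemma abs_PL_subd_minus_PL_le:
  assumes b: "supp_in b M" and rc: "mask_reproduces_constants b" and f: "bounded_seq f"
    and M: "0 \<le> M"
  shows "\<bar>PL (subd b f) (Suc k) x - PL f k x\<bar>
          \<le> (mask_l1 M b * real_of_int (M + 2) + 1) * seq_norm (diff f)"
proof -
  let ?g = "subd b f" and ?D = "seq_norm (diff f)"
  let ?A = "mask_l1 M b * (real_of_int (M + 2) * ?D)"
  define t where "t = x * 2 ^ k"
  define i where "i = \<lfloor>t\<rfloor>"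
  define u where "u = t - of_int i"
  define m where "m = \<lfloor>2*t\<rfloor>"
  define v where "v = 2*t - of_int m"
  have u: "0 \<le> u" "u \<le> 1" unfolding u_def i_def by linarith+
  have v: "0 \<le> v" "v \<le> 1" unfolding v_def m_def by linarith+
  have m: "2*i \<le> m" "m \<le> 2*i + 1" unfolding m_def i_def by linarith+
  have PL_f: "PL f k x = (1 - u) * f i + u * f (i + 1)"
    unfolding PL_def Let_def u_def i_def t_def ..
  have PL_g: "PL ?g (Suc k) x = (1 - v) * ?g m + v * ?g (m + 1)"
  proof -
    have "x * 2 ^ Suc k = 2 * t" unfolding t_def by simp
    then show ?thesis unfolding PL_def Let_def v_def m_def by (simp only:)
  qed
  have G0: "\<bar>?g m - f i\<bar> \<le> ?A" by (rule abs_subd_minus_le[OF b rc f M]) (use m in auto)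
  have G1: "\<bar>?g (m + 1) - f i\<bar> \<le> ?A" by (rule abs_subd_minus_le[OF b rc f M]) (use m in auto)
  have F: "\<bar>f (i + 1) - f i\<bar> \<le> ?D"
    using abs_minus_le_seq_norm_diff[OF f, of "i + 1" i] by simp
  have "PL ?g (Suc k) x - PL f k x = (1 - v) * (?g m - f i) + v * (?g (m + 1) - f i) - u * (f (i + 1) - f i)"
    unfolding PL_f PL_g by (simp add: algebra_simps)
  also have "\<bar>\<dots>\<bar> \<le> (1 - v) * ?A + v * ?A + 1 * ?D"
  proof -
    have "\<bar>(1 - v) * (?g m - f i)\<bar> \<le> (1 - v) * ?A"
      using G0 v by (simp add: abs_mult mult_left_mono)
    moreover have "\<bar>v * (?g (m + 1) - f i)\<bar> \<le> v * ?A"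
      using G1 v by (simp add: abs_mult mult_left_mono)
    moreover have "\<bar>u * (f (i + 1) - f i)\<bar> \<le> 1 * ?D"
      unfolding abs_mult using F u by (intro mult_mono) auto
    ultimately show ?thesis by arith
  qed
  also have "\<dots> = (mask_l1 M b * real_of_int (M + 2) + 1) * ?D" by (simp add: algebra_simps)
  finally show ?thesis .
qed

lemma iter_seq_add: "iter_seq a f (k + m) = iter_seq (\<lambda>j. a (k + j)) (iter_seq a f k) m"
  by (induction m) simp_all

lemma funpow_subd_eq_iter_seq: "(subd c ^^ m) g = iter_seq (\<lambda>_. c) g m"
  by (induction m) simp_all

lemma diff_iter_seq:
  assumes "\<And>k g. diff (subd (a k) g) = subd (q k) (diff g)"
  shows "diff (iter_seq a f k) = iter_seq q (diff f) k"
  by (induction k) (simp_all add: assms)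

lemma bounded_seq_iter_seq:
  "(\<And>k. supp_in (a k) M) \<Longrightarrow> bounded_seq g \<Longrightarrow> bounded_seq (iter_seq a g m)"
  by (induction m) (auto intro: bounded_seq_subd)

lemma seq_norm_iter_seq_le:
  assumes a: "\<And>k. supp_in (a k) M" and B: "\<And>k. mask_l1 M (a k) \<le> B" and g: "bounded_seq g"
  shows "seq_norm (iter_seq a g m) \<le> B ^ m * seq_norm g"
proof (induction m)
  case (Suc m)
  have B0: "0 \<le> B" using mask_l1_nonneg order_trans B by blast
  have "seq_norm (iter_seq a g (Suc m)) \<le> mask_l1 M (a m) * seq_norm (iter_seq a g m)"
    using seq_norm_subd_le[OF a bounded_seq_iter_seq[OF a g]] by simp
  also have "\<dots> \<le> B * (B ^ m * seq_norm g)"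
    using Suc B0 by (intro mult_mono B seq_norm_nonneg bounded_seq_iter_seq[OF a g])
  finally show ?case by simp
qed simp

lemma seq_norm_iter_seq_minus_le:
  assumes a: "\<And>k. supp_in (a k) M" and b: "\<And>k. supp_in (b k) M"
    and aB: "\<And>k. mask_l1 M (a k) \<le> B" and bB: "\<And>k. mask_l1 M (b k) \<le> B" and B: "1 \<le> B"
    and g: "bounded_seq g"
  shows "seq_norm (\<lambda>i. iter_seq a g m i - iter_seq b g m i)
           \<le> B ^ m * (\<Sum>l<m. mask_l1 M (\<lambda>i. a l i - b l i)) * seq_norm g"
proof (induction m)
  case 0
  show ?case by (rule seq_norm_le) simp
next
  case (Suc m)
  let ?P = "iter_seq a g m" and ?X = "iter_seq b g m"
  let ?S = "\<Sum>l<m. mask_l1 M (\<lambda>i. a l i - b l i)" and ?d = "mask_l1 M (\<lambda>i. a m i - b m i)"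
  have P: "bounded_seq ?P" and X: "bounded_seq ?X"
    using bounded_seq_iter_seq a b g by blast+
  have PX: "bounded_seq (\<lambda>i. ?P i - ?X i)" by (rule bounded_seq_minus[OF P X])
  have G: "0 \<le> seq_norm g" by (rule seq_norm_nonneg[OF g])
  have Bm: "B ^ m \<le> B ^ Suc m" using B by simp
  show ?case
  proof (rule seq_norm_le)
    fix i
    have "iter_seq a g (Suc m) i - iter_seq b g (Suc m) i
          = subd (a m) (\<lambda>i. ?P i - ?X i) i + subd (\<lambda>i. a m i - b m i) ?X i"
      using subd_minus[where b="a m" and f="?P" and g="?X"]
        subd_mask_minus[OF a b, where f="?X"] by simp
    also have "\<bar>\<dots>\<bar> \<le> B * (B ^ m * ?S * seq_norm g) + ?d * (B ^ Suc m * seq_norm g)"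
    proof -
      have "\<bar>subd (a m) (\<lambda>i. ?P i - ?X i) i\<bar> \<le> mask_l1 M (a m) * seq_norm (\<lambda>i. ?P i - ?X i)"
        by (rule abs_subd_le[OF a PX])
      also have "\<dots> \<le> B * (B ^ m * ?S * seq_norm g)"
        using B Suc by (intro mult_mono aB seq_norm_nonneg[OF PX]) auto
      finally have 1: "\<bar>subd (a m) (\<lambda>i. ?P i - ?X i) i\<bar> \<le> B * (B ^ m * ?S * seq_norm g)" .
      have "\<bar>subd (\<lambda>i. a m i - b m i) ?X i\<bar> \<le> ?d * seq_norm ?X"
        by (rule abs_subd_le[OF supp_in_minus[OF a b] X])
      also have "\<dots> \<le> ?d * (B ^ Suc m * seq_norm g)"
        using seq_norm_iter_seq_le[where a=b, OF b bB g, of m] mult_right_mono[OF Bm G]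
        by (intro mult_left_mono mask_l1_nonneg) linarith
      finally show ?thesis using 1 by linarith
    qed
    also have "\<dots> = B ^ Suc m * (\<Sum>l<Suc m. mask_l1 M (\<lambda>i. a l i - b l i)) * seq_norm g"
      by (simp add: algebra_simps)
    finally show "\<bar>iter_seq a g (Suc m) i - iter_seq b g (Suc m) i\<bar>
        \<le> B ^ Suc m * (\<Sum>l<Suc m. mask_l1 M (\<lambda>i. a l i - b l i)) * seq_norm g" .
  qed
qed

lemma seq_norm_funpow_le_op_norm_pow_unit:
  assumes c: "supp_in c M" and f: "bounded_seq f" "seq_norm f \<le> 1"
  shows "seq_norm ((subd c ^^ n) f) \<le> op_norm_pow c n"
  unfolding op_norm_pow_def
proof (rule cSUP_upper)
  show "f \<in> {f. bounded_seq f \<and> seq_norm f \<le> 1}" using f by simp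
  show "bdd_above ((\<lambda>f. seq_norm ((subd c ^^ n) f)) ` {f. bounded_seq f \<and> seq_norm f \<le> 1})"
  proof (rule bdd_aboveI2)
    fix f assume "f \<in> {f. bounded_seq f \<and> seq_norm f \<le> 1}"
    then have f: "bounded_seq f" "seq_norm f \<le> 1" by auto
    have "seq_norm ((subd c ^^ n) f) \<le> mask_l1 M c ^ n * seq_norm f"
      unfolding funpow_subd_eq_iter_seq by (rule seq_norm_iter_seq_le[OF c order.refl f(1)])
    also have "\<dots> \<le> mask_l1 M c ^ n"
      using f(2) mult_left_mono[OF f(2)] by (simp add: mask_l1_nonneg)
    finally show "seq_norm ((subd c ^^ n) f) \<le> mask_l1 M c ^ n" .
  qed
qed

lemma op_norm_pow_nonneg:
  assumes c: "supp_in c M"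
  shows "0 \<le> op_norm_pow c n"
proof -
  have zero: "bounded_seq (\<lambda>_. 0)" "seq_norm (\<lambda>_. 0) \<le> 1"
    by (auto intro: bounded_seqI[of _ 0] seq_norm_le)
  have "0 \<le> seq_norm ((subd c ^^ n) (\<lambda>_. 0))"
    unfolding funpow_subd_eq_iter_seq by (rule seq_norm_nonneg[OF bounded_seq_iter_seq[OF c zero(1)]])
  also have "\<dots> \<le> op_norm_pow c n" by (rule seq_norm_funpow_le_op_norm_pow_unit[OF c zero])
  finally show ?thesis .
qed

lemma funpow_subd_scale: "(subd c ^^ n) (\<lambda>i. r * g i) = (\<lambda>i. r * (subd c ^^ n) g i)"
  by (induction n) (simp_all add: subd_scale)

lemma seq_norm_funpow_le_op_norm_pow:
  assumes c: "supp_in c M" and g: "bounded_seq g"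
  shows "seq_norm ((subd c ^^ n) g) \<le> op_norm_pow c n * seq_norm g"
proof (cases "seq_norm g = 0")
  case True
  then show ?thesis
    using seq_norm_iter_seq_le[OF c order.refl g, of n] unfolding funpow_subd_eq_iter_seq by simp
next
  case False
  then have G: "0 < seq_norm g" using seq_norm_nonneg[OF g] by simp
  define h where "h = (\<lambda>i. (1 / seq_norm g) * g i)"
  have h: "bounded_seq h" "seq_norm h \<le> 1"
    unfolding h_def using seq_norm_upper[OF g] G
    by (auto intro!: bounded_seqI[of _ 1] seq_norm_le simp: abs_mult field_simps)
  have scale: "(subd c ^^ n) h = (\<lambda>i. (1 / seq_norm g) * (subd c ^^ n) g i)"
    unfolding h_def by (rule funpow_subd_scale)
  show ?thesis
  proof (rule seq_norm_le)
    fix i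
    have "\<bar>(subd c ^^ n) h i\<bar> \<le> seq_norm ((subd c ^^ n) h)"
      unfolding funpow_subd_eq_iter_seq by (rule seq_norm_upper[OF bounded_seq_iter_seq[OF c h(1)]])
    also have "\<dots> \<le> op_norm_pow c n" by (rule seq_norm_funpow_le_op_norm_pow_unit[OF c h])
    finally have "\<bar>(subd c ^^ n) h i\<bar> \<le> op_norm_pow c n" .
    then show "\<bar>(subd c ^^ n) g i\<bar> \<le> op_norm_pow c n * seq_norm g"
      using G unfolding scale by (simp add: abs_mult field_simps)
  qed
qed

lemma geometric_bound_of_eventual_contraction:
  fixes x :: "nat \<Rightarrow> real"
  assumes x0: "\<And>k. 0 \<le> x k" and step: "\<And>k. x (Suc k) \<le> B * x k" and B: "1 \<le> B"
    and \<eta>: "0 < \<eta>" "\<eta> < 1" and n: "0 < n"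
    and contr: "\<And>k. K \<le> k \<Longrightarrow> x (k + n) \<le> \<eta> ^ n * x k"
  shows "x k \<le> (B / \<eta>) ^ (K + n) * \<eta> ^ k * x 0"
proof (induction k rule: less_induct)
  case (less k)
  let ?C = "(B / \<eta>) ^ (K + n)"
  show ?case
  proof (cases "k < K + n")
    case True
    have power_bound: "x j \<le> B ^ j * x 0" for j
    proof (induction j)
      case (Suc j)
      have "x (Suc j) \<le> B * (B ^ j * x 0)"
        using step[of j] mult_left_mono[OF Suc order_trans[OF zero_le_one B]] by linarith
      then show ?case by simp
    qed simp
    have "B ^ k = (B / \<eta>) ^ k * \<eta> ^ k" using \<eta> by (simp add: power_divide)
    also have "\<dots> \<le> ?C * \<eta> ^ k"
      using True B \<eta> by (intro mult_right_mono power_increasing) (auto simp: field_simps)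
    finally show ?thesis
      using power_bound[of k] mult_right_mono[OF _ x0[of 0]] by (meson order_trans)
  next
    case False
    define j where "j = k - n"
    have k: "k = j + n" and j: "K \<le> j" "j < k" using False n unfolding j_def by auto
    have "x k \<le> \<eta> ^ n * x j" unfolding k by (rule contr[OF j(1)])
    also have "\<dots> \<le> \<eta> ^ n * (?C * \<eta> ^ j * x 0)"
      using less[OF j(2)] \<eta> by (intro mult_left_mono) auto
    also have "\<dots> = ?C * \<eta> ^ k * x 0" unfolding k by (simp add: power_add algebra_simps)
    finally show ?thesis .
  qed
qed

lemma uniform_limit_of_geometric_increments:
  fixes s :: "nat \<Rightarrow> 'a \<Rightarrow> real"
  assumes step: "\<And>k x. \<bar>s (Suc k) x - s k x\<bar> \<le> D * \<eta> ^ k"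
    and \<eta>: "0 < \<eta>" "\<eta> < 1"
  shows "\<exists>l. uniform_limit UNIV s l sequentially \<and> (\<forall>k x. \<bar>l x - s k x\<bar> \<le> D * \<eta> ^ k / (1 - \<eta>))"
proof -
  have tail: "\<bar>s (k + h) x - s k x\<bar> \<le> D * (\<eta> ^ k - \<eta> ^ (k + h)) / (1 - \<eta>)" for k h x
  proof (induction h)
    case (Suc h)
    have "\<bar>s (k + Suc h) x - s k x\<bar> \<le> D * \<eta> ^ (k + h) + D * (\<eta> ^ k - \<eta> ^ (k + h)) / (1 - \<eta>)"
      using step[of "k + h" x] Suc by simp
    also have "\<dots> = D * (\<eta> ^ k - \<eta> ^ (k + Suc h)) / (1 - \<eta>)"
      using \<eta> by (simp add: field_simps)
    finally show ?case .
  qed simp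
  have D: "0 \<le> D" using order_trans[OF abs_ge_zero step[of 0 undefined]] by simp
  have tail': "\<bar>s m x - s k x\<bar> \<le> D * \<eta> ^ k / (1 - \<eta>)" if "k \<le> m" for k m x
  proof -
    obtain h where m: "m = k + h" using \<open>k \<le> m\<close> le_Suc_ex by blast
    have "D * (\<eta> ^ k - \<eta> ^ (k + h)) \<le> D * \<eta> ^ k" using \<eta> D by (simp add: mult_left_mono)
    then have "D * (\<eta> ^ k - \<eta> ^ (k + h)) / (1 - \<eta>) \<le> D * \<eta> ^ k / (1 - \<eta>)"
      using \<eta> by (simp add: divide_right_mono)
    then show ?thesis using tail[of k h x] unfolding m by linarith
  qed
  have small: "(\<lambda>k. D * \<eta> ^ k / (1 - \<eta>)) \<longlonglongrightarrow> 0"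
    using \<eta> by (intro tendsto_divide_zero tendsto_mult_right_zero LIMSEQ_power_zero) simp
  have "uniformly_Cauchy_on UNIV s"
  proof (rule uniformly_Cauchy_onI)
    fix e :: real assume "0 < e"
    then obtain K where K: "D * \<eta> ^ K / (1 - \<eta>) < e / 2"
      using order_tendstoD(2)[OF small, of "e / 2"] by (auto simp: eventually_sequentially)
    have "dist (s m x) (s n x) < e" if "K \<le> m" "K \<le> n" for m n x
      using tail'[OF that(1), of x] tail'[OF that(2), of x] K unfolding dist_real_def by linarith
    then show "\<exists>K. \<forall>x\<in>UNIV. \<forall>m\<ge>K. \<forall>n\<ge>K. dist (s m x) (s n x) < e" by blast
  qed
  then obtain l where l: "uniform_limit UNIV s l sequentially"
    using Cauchy_uniformly_convergent uniformly_convergent_on_def by blast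
  have "\<bar>l x - s k x\<bar> \<le> D * \<eta> ^ k / (1 - \<eta>)" for k x
  proof (rule LIMSEQ_le_const2)
    show "(\<lambda>m. \<bar>s m x - s k x\<bar>) \<longlonglongrightarrow> \<bar>l x - s k x\<bar>"
      by (intro tendsto_intros tendsto_uniform_limitI[OF l]) simp
    show "\<exists>N. \<forall>m\<ge>N. \<bar>s m x - s k x\<bar> \<le> D * \<eta> ^ k / (1 - \<eta>)"
      using tail' by blast
  qed
  with l show ?thesis by blast
qed

lemma limit_fun_eqI:
  assumes "uniform_limit UNIV (\<lambda>k x. PL (iter_seq a f k) k x) g sequentially"
  shows "limit_fun a f = g"
  unfolding limit_fun_def
proof (rule the_equality)
  show "uniform_limit UNIV (\<lambda>k x. PL (iter_seq a f k) k x) g sequentially" by (rule assms)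
next
  fix h assume h: "uniform_limit UNIV (\<lambda>k x. PL (iter_seq a f k) k x) h sequentially"
  show "h = g"
    by (rule ext, rule LIMSEQ_unique[OF tendsto_uniform_limitI[OF h] tendsto_uniform_limitI[OF assms]])
      simp_all
qed

lemma mask_l1_minus_tendsto_zero:
  assumes "\<And>i. (\<lambda>k. b k i) \<longlonglongrightarrow> c i"
  shows "(\<lambda>k. mask_l1 M (\<lambda>i. b k i - c i)) \<longlonglongrightarrow> 0"
proof -
  have "(\<lambda>k. mask_l1 M (\<lambda>i. b k i - c i)) \<longlonglongrightarrow> (\<Sum>m\<in>{-M..M}. \<bar>c m - c m\<bar>)"
    unfolding mask_l1_def by (intro tendsto_intros assms)
  then show ?thesis by simp
qed

lemma mask_l1_bounded:
  assumes "\<And>i. (\<lambda>k. b k i) \<longlonglongrightarrow> c i"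
  shows "\<exists>B. \<forall>k. mask_l1 M (b k) \<le> B"
proof -
  have "(\<lambda>k. mask_l1 M (b k)) \<longlonglongrightarrow> mask_l1 M c"
    unfolding mask_l1_def by (intro tendsto_intros assms)
  then have "Bseq (\<lambda>k. mask_l1 M (b k))" by (rule convergent_imp_Bseq[OF convergentI])
  then show ?thesis by (metis BseqE abs_le_D1 real_norm_def)
qed

lemma root_less_imp_less_power:
  fixes \<mu> \<eta> :: real
  assumes "0 < n" "0 \<le> \<mu>" "root n \<mu> < \<eta>"
  shows "0 < \<eta>" "\<mu> < \<eta> ^ n"
proof -
  show \<eta>: "0 < \<eta>" using assms real_root_ge_zero[of \<mu> n] by linarith
  have "root n \<mu> < root n (\<eta> ^ n)" using assms(3) real_root_power_cancel[OF assms(1)] \<eta> by simp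
  then show "\<mu> < \<eta> ^ n" using assms(1) by simp
qed

locale asymptotically_similar_scheme =
  fixes a :: "nat \<Rightarrow> mask" and astar :: mask and M :: int
  assumes M_nonneg: "0 \<le> M"
    and supp_in_mask: "supp_in (a k) M"
    and supp_in_limit_mask: "supp_in astar M"
    and mask_reproduces_constants: "mask_reproduces_constants (a k)"
    and mask_tendsto: "(\<lambda>k. a k i) \<longlonglongrightarrow> astar i"
begin

lemma supp_in_diff_mask_mask: "supp_in (diff_mask (a k)) M"
  by (rule supp_in_diff_mask[OF supp_in_mask mask_reproduces_constants])

lemma diff_mask_tendsto: "(\<lambda>k. diff_mask (a k) i) \<longlonglongrightarrow> diff_mask astar i"
  unfolding diff_mask_eq_sum[OF supp_in_mask] diff_mask_eq_sum[OF supp_in_limit_mask]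
  by (intro tendsto_intros mask_tendsto)

lemma supp_in_diff_mask_limit: "supp_in (diff_mask astar) M"
  by (rule supp_in_limit[OF supp_in_diff_mask_mask diff_mask_tendsto])

lemma diff_iter_seq_eq: "diff (iter_seq a f k) = iter_seq (\<lambda>k. diff_mask (a k)) (diff f) k"
  by (rule diff_iter_seq[OF diff_subd[OF supp_in_mask mask_reproduces_constants]])

lemma bounded_seq_iter_seq_mask: "bounded_seq f \<Longrightarrow> bounded_seq (iter_seq a f k)"
  by (rule bounded_seq_iter_seq[where a=a, OF supp_in_mask])

lemma diff_mask_l1_bounded:
  "\<exists>B\<ge>1. (\<forall>k. mask_l1 M (diff_mask (a k)) \<le> B) \<and> mask_l1 M (diff_mask astar) \<le> B"
proof -
  obtain B where B: "\<And>k. mask_l1 M (diff_mask (a k)) \<le> B"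
    using mask_l1_bounded[where b="\<lambda>k. diff_mask (a k)", OF diff_mask_tendsto] by blast
  have "mask_l1 M (diff_mask (a k)) \<le> max 1 (max B (mask_l1 M (diff_mask astar)))" for k
    using B[of k] by (simp add: le_max_iff_disj)
  then show ?thesis by (intro exI[of _ "max 1 (max B (mask_l1 M (diff_mask astar)))"]) simp
qed

lemma eventually_contracting:
  assumes \<mu>: "op_norm_pow (diff_mask astar) n < \<eta> ^ n"
  obtains K where "\<And>k g. K \<le> k \<Longrightarrow> bounded_seq g \<Longrightarrow>
    seq_norm (iter_seq (\<lambda>j. diff_mask (a (k + j))) g n) \<le> \<eta> ^ n * seq_norm g"
proof -
  let ?q = "\<lambda>k. diff_mask (a k)" and ?qs = "diff_mask astar"
  let ?\<mu> = "op_norm_pow ?qs n"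
  obtain B where B: "1 \<le> B" "\<And>k. mask_l1 M (?q k) \<le> B" "mask_l1 M ?qs \<le> B"
    using diff_mask_l1_bounded by auto
  let ?d = "\<lambda>k. B ^ n * (\<Sum>l<n. mask_l1 M (\<lambda>i. ?q (k + l) i - ?qs i))"
  have "?d \<longlonglongrightarrow> B ^ n * (\<Sum>l<n. 0)"
    using LIMSEQ_ignore_initial_segment[OF mask_l1_minus_tendsto_zero[OF diff_mask_tendsto]]
    by (intro tendsto_intros) (simp add: add.commute)
  then obtain K where K: "\<And>k. K \<le> k \<Longrightarrow> ?d k < \<eta> ^ n - ?\<mu>"
    using order_tendstoD(2)[of ?d 0 sequentially "\<eta> ^ n - ?\<mu>"] \<mu> by (auto simp: eventually_sequentially)
  show ?thesis
  proof (rule that)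
    fix k g assume k: "K \<le> k" and g: "bounded_seq g"
    let ?P = "iter_seq (\<lambda>j. ?q (k + j)) g n" and ?X = "iter_seq (\<lambda>_. ?qs) g n"
    have "seq_norm (\<lambda>i. ?P i - ?X i) \<le> ?d k * seq_norm g"
      by (rule seq_norm_iter_seq_minus_le[where a="\<lambda>j. ?q (k + j)" and b="\<lambda>_. ?qs", OF supp_in_diff_mask_mask supp_in_diff_mask_limit B(2,3,1) g])
    moreover have "seq_norm ?X \<le> ?\<mu> * seq_norm g"
      using seq_norm_funpow_le_op_norm_pow[OF supp_in_diff_mask_limit g]
      unfolding funpow_subd_eq_iter_seq .
    moreover have "?d k * seq_norm g \<le> (\<eta> ^ n - ?\<mu>) * seq_norm g"
      using K[OF k] seq_norm_nonneg[OF g] by (intro mult_right_mono) auto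
    moreover have X: "bounded_seq ?X"
      by (rule bounded_seq_iter_seq[OF supp_in_diff_mask_limit g])
    moreover have PX: "bounded_seq (\<lambda>i. ?P i - ?X i)"
      by (rule bounded_seq_minus[OF bounded_seq_iter_seq[where a="\<lambda>j. ?q (k + j)", OF supp_in_diff_mask_mask g] X])
    ultimately have "\<bar>?P i\<bar> \<le> \<eta> ^ n * seq_norm g" for i
      using seq_norm_upper[OF PX, of i] seq_norm_upper[OF X, of i] by (simp add: algebra_simps)
    then show "seq_norm ?P \<le> \<eta> ^ n * seq_norm g" by (rule seq_norm_le)
  qed
qed

lemma diff_iter_seq_geometric_decay:
  assumes n: "0 < n" and \<mu>: "op_norm_pow (diff_mask astar) n < \<eta> ^ n" and \<eta>: "0 < \<eta>" "\<eta> < 1"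
  obtains C where "0 < C"
    "\<And>f k. bounded_seq f \<Longrightarrow> seq_norm (diff (iter_seq a f k)) \<le> C * \<eta> ^ k * seq_norm (diff f)"
proof -
  let ?q = "\<lambda>k. diff_mask (a k)"
  obtain B where B: "1 \<le> B" "\<And>k. mask_l1 M (?q k) \<le> B"
    using diff_mask_l1_bounded by auto
  obtain K where K: "\<And>k g. K \<le> k \<Longrightarrow> bounded_seq g \<Longrightarrow>
      seq_norm (iter_seq (\<lambda>j. ?q (k + j)) g n) \<le> \<eta> ^ n * seq_norm g"
    using eventually_contracting[OF \<mu>] by blast
  show ?thesis
  proof (rule that)
    show "0 < (B / \<eta>) ^ (K + n)" using B \<eta> by simp
    fix f k assume f: "bounded_seq f"
    let ?x = "\<lambda>k. seq_norm (diff (iter_seq a f k))"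
    have bounded: "bounded_seq (diff (iter_seq a f k))" for k
      by (rule bounded_seq_diff[OF bounded_seq_iter_seq_mask[OF f]])
    have diff_eq: "diff (iter_seq a f k) = iter_seq ?q (diff f) k" for k
      by (rule diff_iter_seq_eq)
    have "?x k \<le> (B / \<eta>) ^ (K + n) * \<eta> ^ k * ?x 0"
    proof (rule geometric_bound_of_eventual_contraction[where x="?x" and K=K, OF _ _ B(1) \<eta> n])
      show "0 \<le> ?x k" for k by (rule seq_norm_nonneg[OF bounded])
      show "?x (Suc k) \<le> B * ?x k" for k
      proof -
        have "diff (iter_seq a f (Suc k)) = subd (?q k) (diff (iter_seq a f k))"
          unfolding diff_eq by simp
        then have "?x (Suc k) \<le> mask_l1 M (?q k) * ?x k"
          using seq_norm_subd_le[OF supp_in_diff_mask_mask bounded] by simp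
        also have "\<dots> \<le> B * ?x k" by (rule mult_right_mono[OF B(2) seq_norm_nonneg[OF bounded]])
        finally show ?thesis .
      qed
      show "?x (k + n) \<le> \<eta> ^ n * ?x k" if "K \<le> k" for k
      proof -
        have "diff (iter_seq a f (k + n)) = iter_seq ?q (diff f) (k + n)" by (rule diff_eq)
        also have "\<dots> = iter_seq (\<lambda>j. ?q (k + j)) (diff (iter_seq a f k)) n"
          unfolding iter_seq_add diff_eq ..
        finally show ?thesis using K[OF that bounded] by simp
      qed
    qed
    then show "?x k \<le> (B / \<eta>) ^ (K + n) * \<eta> ^ k * seq_norm (diff f)" by simp
  qed
qed

lemma PL_iter_seq_step_le:
  obtains c where "0 < c" "\<And>f k x. bounded_seq f \<Longrightarrow>
    \<bar>PL (iter_seq a f (Suc k)) (Suc k) x - PL (iter_seq a f k) k x\<bar> \<le> c * seq_norm (diff (iter_seq a f k))"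
proof -
  obtain A where A: "\<And>k. mask_l1 M (a k) \<le> A"
    using mask_l1_bounded[where b=a, OF mask_tendsto] by blast
  let ?c = "max 0 A * real_of_int (M + 2) + 1"
  show ?thesis
  proof (rule that)
    have "0 \<le> max 0 A * real_of_int (M + 2)" using M_nonneg by simp
    then show "0 < ?c" by linarith
    fix f k x assume f: "bounded_seq f"
    have "\<bar>PL (iter_seq a f (Suc k)) (Suc k) x - PL (iter_seq a f k) k x\<bar>
        \<le> (mask_l1 M (a k) * real_of_int (M + 2) + 1) * seq_norm (diff (iter_seq a f k))"
      using abs_PL_subd_minus_PL_le[OF supp_in_mask mask_reproduces_constants
          bounded_seq_iter_seq_mask[OF f] M_nonneg] by simp
    also have "\<dots> \<le> ?c * seq_norm (diff (iter_seq a f k))"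
      using A[of k] M_nonneg seq_norm_nonneg[OF bounded_seq_diff[OF bounded_seq_iter_seq_mask[OF f]]]
      by (intro mult_right_mono add_right_mono mult_right_mono) auto
    finally show "\<bar>PL (iter_seq a f (Suc k)) (Suc k) x - PL (iter_seq a f k) k x\<bar>
        \<le> ?c * seq_norm (diff (iter_seq a f k))" .
  qed
qed

lemma PL_iter_seq_converges_geometrically:
  assumes n: "0 < n" and \<eta>: "root n (op_norm_pow (diff_mask astar) n) < \<eta>" "\<eta> < 1"
  obtains D where "0 < D" "\<And>f. bounded_seq f \<Longrightarrow>
    uniform_limit UNIV (\<lambda>k x. PL (iter_seq a f k) k x) (limit_fun a f) sequentially \<and>
    (\<forall>k x. \<bar>limit_fun a f x - PL (iter_seq a f k) k x\<bar> \<le> D * \<eta> ^ k * seq_norm (diff f))"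
proof -
  have \<mu>: "0 \<le> op_norm_pow (diff_mask astar) n" by (rule op_norm_pow_nonneg[OF supp_in_diff_mask_limit])
  have \<eta>0: "0 < \<eta>" by (rule root_less_imp_less_power(1)[OF n \<mu> \<eta>(1)])
  obtain C where C: "0 < C" "\<And>f k. bounded_seq f \<Longrightarrow>
      seq_norm (diff (iter_seq a f k)) \<le> C * \<eta> ^ k * seq_norm (diff f)"
    using diff_iter_seq_geometric_decay[OF n root_less_imp_less_power(2)[OF n \<mu> \<eta>(1)] \<eta>0 \<eta>(2)]
    by blast
  obtain c where c: "0 < c" "\<And>f k x. bounded_seq f \<Longrightarrow>
      \<bar>PL (iter_seq a f (Suc k)) (Suc k) x - PL (iter_seq a f k) k x\<bar> \<le> c * seq_norm (diff (iter_seq a f k))"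
    using PL_iter_seq_step_le by blast
  show ?thesis
  proof (rule that)
    show "0 < c * C / (1 - \<eta>)" using c C \<eta>(2) by simp
    fix f assume f: "bounded_seq f"
    have step: "\<bar>PL (iter_seq a f (Suc k)) (Suc k) x - PL (iter_seq a f k) k x\<bar>
        \<le> c * C * seq_norm (diff f) * \<eta> ^ k" for k x
    proof -
      have "\<bar>PL (iter_seq a f (Suc k)) (Suc k) x - PL (iter_seq a f k) k x\<bar>
          \<le> c * seq_norm (diff (iter_seq a f k))" by (rule c(2)[OF f])
      also have "\<dots> \<le> c * (C * \<eta> ^ k * seq_norm (diff f))"
        by (rule mult_left_mono[OF C(2)[OF f]]) (use c in simp)
      finally show ?thesis by (simp add: algebra_simps)
    qed
    obtain l where l: "uniform_limit UNIV (\<lambda>k x. PL (iter_seq a f k) k x) l sequentially"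
      "\<And>k x. \<bar>l x - PL (iter_seq a f k) k x\<bar> \<le> c * C * seq_norm (diff f) * \<eta> ^ k / (1 - \<eta>)"
      using uniform_limit_of_geometric_increments[where s="\<lambda>k x. PL (iter_seq a f k) k x", OF step \<eta>0 \<eta>(2)]
      by blast
    then show "uniform_limit UNIV (\<lambda>k x. PL (iter_seq a f k) k x) (limit_fun a f) sequentially \<and>
        (\<forall>k x. \<bar>limit_fun a f x - PL (iter_seq a f k) k x\<bar> \<le> c * C / (1 - \<eta>) * \<eta> ^ k * seq_norm (diff f))"
      unfolding limit_fun_eqI[OF l(1)] by (simp add: field_simps)
  qed
qed

end

lemma asymptotically_similar_schemeI:
  assumes fin: "fin_supp astar" and loc: "local_scheme a" and rc: "reproduces_constants a"
    and conv: "(\<lambda>k. seq_norm (\<lambda>i. a k i - astar i)) \<longlonglongrightarrow> 0"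
  shows "\<exists>M. asymptotically_similar_scheme a astar M"
proof -
  obtain N :: int where N: "0 < N" "\<And>k i. a k i \<noteq> 0 \<Longrightarrow> i \<in> {-N..N}"
    using loc unfolding local_scheme_def by blast
  have supp: "supp_in (a k) N" for k using N(2) unfolding supp_in_def by fastforce
  have bounded: "bounded_seq (\<lambda>i. a k i - astar i)" for k
  proof (rule bounded_seq_finite_support)
    have "{i. a k i - astar i \<noteq> 0} \<subseteq> {-N..N} \<union> {i. astar i \<noteq> 0}" using N(2) by fastforce
    moreover have "finite ({-N..N} \<union> {i. astar i \<noteq> 0})" using fin unfolding fin_supp_def by simp
    ultimately show "finite {i. a k i - astar i \<noteq> 0}" by (rule finite_subset)
  qed
  have tendsto: "(\<lambda>k. a k i) \<longlonglongrightarrow> astar i" for i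
  proof (rule LIM_zero_cancel, rule Lim_null_comparison[OF _ conv])
    show "\<forall>\<^sub>F k in sequentially. norm (a k i - astar i) \<le> seq_norm (\<lambda>i. a k i - astar i)"
      using seq_norm_upper[OF bounded] by simp
  qed
  have "supp_in astar N" by (rule supp_in_limit[where b=a, OF supp tendsto])
  then show ?thesis
    using N(1) supp tendsto rc
    unfolding asymptotically_similar_scheme_def reproduces_constants_def mask_reproduces_constants_def
    by (intro exI[of _ N]) auto
qed

theorem theorem11:
  fixes astar :: mask and a :: "nat \<Rightarrow> mask" and n :: nat
  assumes "fin_supp astar"
    and "convergent_scheme (\<lambda>k. astar)"
    and "n > 0"
    and "op_norm_pow (diff_mask astar) n < 1"
    and "local_scheme a"
    and "reproduces_constants a"
    and "(\<lambda>k. seq_norm (\<lambda>i. a k i - astar i)) \<longlonglongrightarrow> 0"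
  shows "convergent_scheme a \<and>
    (\<forall>\<eta>. root n (op_norm_pow (diff_mask astar) n) < \<eta> \<and> \<eta> < 1 \<longrightarrow>
      (\<exists>C>0. \<forall>f. bounded_seq f \<longrightarrow> (\<forall>k. \<forall>x.
         \<bar>limit_fun a f x - PL (iter_seq a f (Suc k)) (Suc k) x\<bar>
           \<le> C * \<eta> ^ k * seq_norm (diff f))))"
proof -
  let ?\<mu> = "op_norm_pow (diff_mask astar) n"
  obtain M where "asymptotically_similar_scheme a astar M"
    using asymptotically_similar_schemeI[OF assms(1,5,6,7)] by blast
  then interpret asymptotically_similar_scheme a astar M .
  have \<mu>: "0 \<le> ?\<mu>" by (rule op_norm_pow_nonneg[OF supp_in_diff_mask_limit])
  note rate = PL_iter_seq_converges_geometrically[OF assms(3)]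
  have "root n ?\<mu> < (root n ?\<mu> + 1) / 2" "(root n ?\<mu> + 1) / 2 < 1" using assms(3,4) by simp_all
  then have "convergent_scheme a"
    unfolding convergent_scheme_def by (metis rate)
  moreover have "\<exists>C>0. \<forall>f. bounded_seq f \<longrightarrow> (\<forall>k x.
      \<bar>limit_fun a f x - PL (iter_seq a f (Suc k)) (Suc k) x\<bar> \<le> C * \<eta> ^ k * seq_norm (diff f))"
    if \<eta>: "root n ?\<mu> < \<eta>" "\<eta> < 1" for \<eta>
  proof -
    obtain D where D: "0 < D" "\<And>f k x. bounded_seq f \<Longrightarrow>
        \<bar>limit_fun a f x - PL (iter_seq a f k) k x\<bar> \<le> D * \<eta> ^ k * seq_norm (diff f)"
      using rate[OF \<eta>] by metis
    have "D * \<eta> ^ Suc k * seq_norm (diff f) \<le> D * \<eta> ^ k * seq_norm (diff f)" if "bounded_seq f" for f k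
      using D(1) \<eta> root_less_imp_less_power(1)[OF assms(3) \<mu> \<eta>(1)]
        seq_norm_nonneg[OF bounded_seq_diff[OF that]]
      by (intro mult_right_mono mult_left_mono) (auto simp: mult_left_le_one_le)
    then show ?thesis using D by (meson order_trans)
  qed
  ultimately show ?thesis by blast
qed

end
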